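(* There is a (deterministic) $\Sigma_{\diamond}$-matrix $\mathbb{M}$ such that $\rhd_{\diamond}=\rhd_{\mathbb{M}}$.
   Context: $\Sigma_\diamond$ is the signature with a single binary connective $\diamond$ (platypus). $\mathbb{B}_\diamond=\langle\{0,1\},\cdot,\{1\}\rangle$ is the two-valued Nmatrix interpreting $\diamond$ by $\diamond(0,0)=\{0\}$, $\diamond(1,1)=\{1\}$, $\diamond(0,1)=\diamond(1,0)=\{0,1\}$. For an Nmatrix (or matrix, where all connectives are interpreted as functions) $\mathbb{M}$ with designated set $D$, $\Gamma\rhd_{\mathbb{M}}\Delta$ iff every $\mathbb{M}$-valuation $v$ with $v(\Gamma)\subseteq D$ satisfies $v(\Delta)\cap D\neq\emptyset$; $\rhd_\diamond$ is $\rhd_{\mathbb{B}_\diamond}$. A matrix is deterministic, i.e. each connective is interpreted as a function. *)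

theory Defs
  imports Main
begin

datatype form = Var nat | Plat form form

text \<open>The two-valued Nmatrix B_platypus: values {0,1} rendered as bool (True = 1),
  designated set {1}.\<close>
definition plat_nd :: "bool \<Rightarrow> bool \<Rightarrow> bool set" where
  "plat_nd a b = (if a = b then {a} else {False, True})"

definition Bval :: "(form \<Rightarrow> bool) \<Rightarrow> bool" where
  "Bval v \<longleftrightarrow> (\<forall>A B. v (Plat A B) \<in> plat_nd (v A) (v B))"

definition plat_cons :: "form set \<Rightarrow> form set \<Rightarrow> bool" where
  "plat_cons \<Gamma> \<Delta> \<longleftrightarrow> (\<forall>v. Bval v \<longrightarrow> (\<forall>A\<in>\<Gamma>. v A) \<longrightarrow> (\<exists>B\<in>\<Delta>. v B))"

definition is_matrix :: "'v set \<Rightarrow> ('v \<Rightarrow> 'v \<Rightarrow> 'v) \<Rightarrow> 'v set \<Rightarrow> bool" where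
  "is_matrix V f D \<longleftrightarrow> V \<noteq> {} \<and> D \<subseteq> V \<and> (\<forall>a\<in>V. \<forall>b\<in>V. f a b \<in> V)"

definition mval :: "'v set \<Rightarrow> ('v \<Rightarrow> 'v \<Rightarrow> 'v) \<Rightarrow> (form \<Rightarrow> 'v) \<Rightarrow> bool" where
  "mval V f v \<longleftrightarrow> (\<forall>A. v A \<in> V) \<and> (\<forall>A B. v (Plat A B) = f (v A) (v B))"

definition mcons :: "'v set \<Rightarrow> ('v \<Rightarrow> 'v \<Rightarrow> 'v) \<Rightarrow> 'v set \<Rightarrow> form set \<Rightarrow> form set \<Rightarrow> bool" where
  "mcons V f D \<Gamma> \<Delta> \<longleftrightarrow>
     (\<forall>v. mval V f v \<longrightarrow> v ` \<Gamma> \<subseteq> D \<longrightarrow> v ` \<Delta> \<inter> D \<noteq> {})"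

end

theory Submission
  imports Defs "HOL-Library.Countable"
begin

text \<open>A deterministic matrix simulates the Nmatrix if every value carries, besides its truth bit,
  the formula it is the value of and an oracle (a set of formulas) that fixes all
  non-deterministic choices in advance: the connective keeps the common bit of its arguments
  when they agree and otherwise asks the oracle of its first argument whether the compound
  formula is true.  The truth bits of any valuation of this matrix then form a valuation of the
  Nmatrix, and every valuation w of the Nmatrix is the truth part of the matrix valuation
  A \<mapsto> (w A, A, {B. w B}).  Since formulas are countable, these values can be coded
  injectively by sets of sets of naturals, and an isomorphic copy of a matrix has the same
  consequence relation.\<close>

lemma mcons_iso:
  assumes "is_matrix V f D" and "inj_on e V"
    and hom: "\<forall>a\<in>V. \<forall>b\<in>V. f' (e a) (e b) = e (f a b)"
  shows "mcons (e ` V) f' (e ` D) \<Gamma> \<Delta> \<longleftrightarrow> mcons V f D \<Gamma> \<Delta>"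
proof -
  have designated_iff: "e x \<in> e ` D \<longleftrightarrow> x \<in> D" if "x \<in> V" for x
    using assms(1,2) that by (auto simp: is_matrix_def inj_on_image_mem_iff)
  have premises_iff: "(e \<circ> u) ` \<Gamma> \<subseteq> e ` D \<longleftrightarrow> u ` \<Gamma> \<subseteq> D"
    and conclusions_iff: "(e \<circ> u) ` \<Delta> \<inter> e ` D \<noteq> {} \<longleftrightarrow> u ` \<Delta> \<inter> D \<noteq> {}"
    if "\<forall>A. u A \<in> V" for u
    using that by (auto simp: image_subset_iff disjoint_iff designated_iff)
  have mval_comp: "mval (e ` V) f' (e \<circ> u)" if "mval V f u" for u
    using that hom by (auto simp: mval_def)
  have mval_factor: "\<exists>u. mval V f u \<and> u' = e \<circ> u" if u': "mval (e ` V) f' u'" for u'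
  proof -
    define u where "u = inv_into V e \<circ> u'"
    have u'_eq: "u' = e \<circ> u" and u_in: "\<forall>A. u A \<in> V"
      using u' by (auto simp: u_def mval_def f_inv_into_f inv_into_into)
    have "u (Plat A B) = f (u A) (u B)" for A B
    proof -
      have "e (u (Plat A B)) = e (f (u A) (u B))"
        using u' hom u_in by (simp add: u'_eq mval_def)
      then show ?thesis
        using assms(1,2) u_in by (auto simp: is_matrix_def inj_on_eq_iff)
    qed
    with u'_eq u_in show ?thesis
      by (auto simp: mval_def)
  qed
  show ?thesis
    unfolding mcons_def
  proof (intro iffI allI impI)
    fix u assume "\<forall>u'. mval (e ` V) f' u' \<longrightarrow> u' ` \<Gamma> \<subseteq> e ` D \<longrightarrow> u' ` \<Delta> \<inter> e ` D \<noteq> {}"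
      and "mval V f u" and "u ` \<Gamma> \<subseteq> D"
    then show "u ` \<Delta> \<inter> D \<noteq> {}"
      using mval_comp premises_iff conclusions_iff by (metis mval_def)
  next
    fix u' assume cons: "\<forall>u. mval V f u \<longrightarrow> u ` \<Gamma> \<subseteq> D \<longrightarrow> u ` \<Delta> \<inter> D \<noteq> {}"
      and u': "mval (e ` V) f' u'" and "u' ` \<Gamma> \<subseteq> e ` D"
    obtain u where "mval V f u" and "u' = e \<circ> u"
      using mval_factor[OF u'] by blast
    then show "u' ` \<Delta> \<inter> e ` D \<noteq> {}"
      using cons \<open>u' ` \<Gamma> \<subseteq> e ` D\<close> premises_iff conclusions_iff by (metis mval_def)
  qed
qed

fun plat_oracle ::
  "bool \<times> form \<times> form set \<Rightarrow> bool \<times> form \<times> form set \<Rightarrow> bool \<times> form \<times> form set" where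
  "plat_oracle (a, A, T) (b, B, _) = (if a = b then a else Plat A B \<in> T, Plat A B, T)"

lemma Bval_truth_of_oracle_mval:
  assumes "mval UNIV plat_oracle u"
  shows "Bval (fst \<circ> u)"
  unfolding Bval_def
proof (intro allI)
  fix A B
  have "u (Plat A B) = plat_oracle (u A) (u B)"
    using assms by (simp add: mval_def)
  then show "(fst \<circ> u) (Plat A B) \<in> plat_nd ((fst \<circ> u) A) ((fst \<circ> u) B)"
    by (cases "u A"; cases "u B") (auto simp: plat_nd_def)
qed

lemma oracle_mval_of_Bval:
  assumes "Bval w"
  shows "mval UNIV plat_oracle (\<lambda>A. (w A, A, {B. w B}))"
  unfolding mval_def
proof (intro conjI allI)
  fix A B
  have "w (Plat A B) \<in> plat_nd (w A) (w B)"
    using assms by (simp add: Bval_def)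
  then show "(w (Plat A B), Plat A B, {B. w B}) = plat_oracle (w A, A, {B. w B}) (w B, B, {B. w B})"
    by (auto simp: plat_nd_def split: if_splits)
qed simp

lemma plat_cons_iff_mcons_oracle:
  "plat_cons \<Gamma> \<Delta> \<longleftrightarrow> mcons UNIV plat_oracle {x. fst x} \<Gamma> \<Delta>"
proof
  assume cons: "plat_cons \<Gamma> \<Delta>"
  show "mcons UNIV plat_oracle {x. fst x} \<Gamma> \<Delta>"
    unfolding mcons_def
  proof (intro allI impI)
    fix u assume "mval UNIV plat_oracle u" and "u ` \<Gamma> \<subseteq> {x. fst x}"
    then have "Bval (fst \<circ> u)" and "\<forall>A\<in>\<Gamma>. fst (u A)"
      using Bval_truth_of_oracle_mval by auto
    then show "u ` \<Delta> \<inter> {x. fst x} \<noteq> {}"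
      using cons by (fastforce simp: plat_cons_def)
  qed
next
  assume cons: "mcons UNIV plat_oracle {x. fst x} \<Gamma> \<Delta>"
  show "plat_cons \<Gamma> \<Delta>"
    unfolding plat_cons_def
  proof (intro allI impI)
    fix w assume "Bval w" and "\<forall>A\<in>\<Gamma>. w A"
    then show "\<exists>B\<in>\<Delta>. w B"
      using cons oracle_mval_of_Bval[of w] by (fastforce simp: mcons_def)
  qed
qed

instance form :: countable
  by countable_datatype

definition code_value :: "bool \<times> form \<times> form set \<Rightarrow> nat set set" where
  "code_value = (\<lambda>(b, A, T). {to_nat ` insert (Inl (b, A)) (Inr ` T)})"

lemma inj_code_value: "inj code_value"
proof (rule injI)
  fix x y assume code_eq: "code_value x = code_value y"
  obtain b A T c B U where x: "x = (b, A, T)" and y: "y = (c, B, U)"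
    by (cases x; cases y)
  have "to_nat ` insert (Inl (b, A)) (Inr ` T) = to_nat ` insert (Inl (c, B)) (Inr ` U)"
    using code_eq by (simp add: code_value_def x y del: image_insert)
  then have "insert (Inl (b, A)) (Inr ` T) = insert (Inl (c, B)) (Inr ` U)"
    by (simp add: inj_image_eq_iff del: image_insert)
  then have "(b, A) = (c, B)" and "T = U"
    by blast+
  then show "x = y"
    by (simp add: x y)
qed

theorem proposition3:
  shows "\<exists>(V :: nat set set set) f D. is_matrix V f D \<and>
           (\<forall>\<Gamma> \<Delta>. plat_cons \<Gamma> \<Delta> \<longleftrightarrow> mcons V f D \<Gamma> \<Delta>)"
proof -
  define f where "f x y = code_value (plat_oracle (inv code_value x) (inv code_value y))" for x y
  have oracle_matrix: "is_matrix UNIV plat_oracle {x. fst x}"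
    by (simp add: is_matrix_def)
  have "\<forall>a\<in>UNIV. \<forall>b\<in>UNIV. f (code_value a) (code_value b) = code_value (plat_oracle a b)"
    using inj_code_value by (simp add: f_def)
  then have "plat_cons \<Gamma> \<Delta> \<longleftrightarrow> mcons (range code_value) f (code_value ` {x. fst x}) \<Gamma> \<Delta>" for \<Gamma> \<Delta>
    using oracle_matrix inj_code_value by (simp add: mcons_iso plat_cons_iff_mcons_oracle)
  moreover have "is_matrix (range code_value) f (code_value ` {x. fst x})"
    using oracle_matrix by (auto simp: is_matrix_def f_def)
  ultimately show ?thesis
    by auto
qed

end
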